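(* For every integer $n\ge 1$, \[ |\mathfrak D^1_{2n}(2341,1423)|=\frac{1}{\sqrt{17}}\left(\left(\frac{3+\sqrt{17}}{2}\right)^n-\left(\frac{3-\sqrt{17}}{2}\right)^n\right)=\left[\frac{1}{\sqrt{17}}\left(\frac{3+\sqrt{17}}{2}\right)^n\right], \] where $[a]$ denotes the integer closest to $a$.
   Context: A Dumont permutation of the first kind of length $2n$ is a permutation $\pi\in\mathfrak S_{2n}$ such that for every $i=1,\dots,2n$: if $\pi(i)$ is even then $i<2n$ and $\pi(i)>\pi(i+1)$; if $\pi(i)$ is odd then $i=2n$ or $\pi(i)<\pi(i+1)$. $\mathfrak D^1_{2n}$ denotes the set of these. A permutation $\sigma$ contains a pattern $\tau\in\mathfrak S_k$ if some subsequence $(\sigma(i_1),\dots,\sigma(i_k))$, $i_1<\dots<i_k$, is order-isomorphic to $\tau$; otherwise $\sigma$ avoids $\tau$. $\mathfrak D^1_{2n}(T)$ denotes the set of permutations in $\mathfrak D^1_{2n}$ avoiding every pattern in $T$. *)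

theory Defs
  imports Complex_Main
begin

definition is_perm :: "nat \<Rightarrow> nat list \<Rightarrow> bool" where
  "is_perm m p \<longleftrightarrow> length p = m \<and> distinct p \<and> set p = {1..m}"

definition dumont1 :: "nat \<Rightarrow> nat list \<Rightarrow> bool" where
  "dumont1 n p \<longleftrightarrow> is_perm (2*n) p \<and>
     (\<forall>i < 2*n.
        (even (p!i) \<longrightarrow> i + 1 < 2*n \<and> p!i > p!(i+1)) \<and>
        (odd (p!i) \<longrightarrow> i + 1 = 2*n \<or> p!i < p!(i+1)))"

definition contains :: "nat list \<Rightarrow> nat list \<Rightarrow> bool" where
  "contains \<sigma> \<tau> \<longleftrightarrow> (\<exists>idx :: nat list.
      length idx = length \<tau> \<and> sorted_wrt (<) idx \<and> (\<forall>j < length idx. idx!j < length \<sigma>) \<and>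
      (\<forall>a < length \<tau>. \<forall>b < length \<tau>. (\<sigma>!(idx!a) < \<sigma>!(idx!b) \<longleftrightarrow> \<tau>!a < \<tau>!b)))"

definition avoids :: "nat list \<Rightarrow> nat list \<Rightarrow> bool" where
  "avoids \<sigma> \<tau> \<longleftrightarrow> \<not> contains \<sigma> \<tau>"

definition Dumont1_avoid :: "nat \<Rightarrow> nat list set \<Rightarrow> nat list set" where
  "Dumont1_avoid n T = {p. dumont1 n p \<and> (\<forall>\<tau>\<in>T. avoids p \<tau>)}"

end

(*
  Write m = 2n. In a Dumont permutation of the first kind the even entry m is followed by a
  smaller one, and the odd entry m - 1 is either last or followed by m. Avoiding 2341 and 1423
  then determines everything around these two entries: for n >= 2 the permutation has exactly
  one of the shapes

    q m (m-1),   (m-1) m q,   m q (m-1),   r (m-1) m (m-2) (m-3),   (m-2) (m-3) m r (m-1),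

  where q is an avoiding Dumont permutation of [1..m-2] and r a nonempty one of [1..m-4].
  Conversely all these shapes avoid both patterns, because in 2341 and 1423 the two smallest
  entries are not adjacent, so a block of small values inserted at a single place cannot take
  part in a new occurrence. Counting the nonempty avoiders therefore gives a sequence with
  a(0) = 0, a(1) = 1 and a(n+2) = 3 a(n+1) + 2 a(n), whose Binet form is the stated
  formula; the rounding holds because |(3 - sqrt 17) / 2| < 1.
*)

theory Submission
  imports Defs "HOL-Library.Sublist"
begin

lemma set_mono_subseq: "subseq xs ys \<Longrightarrow> set xs \<subseteq> set ys"
  by (induction rule: list_emb.induct) auto

lemma subseq_Cons_Cons_iff: "subseq (a # s) (x # xs) \<longleftrightarrow> a = x \<and> subseq s xs \<or> subseq (a # s) xs"
  by (cases "a = x") (auto dest: subseq_Cons')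

lemma subseq_map_nth_drop:
  assumes "sorted_wrt (<) idx" "\<forall>j\<in>set idx. k \<le> j \<and> j < length \<sigma>"
  shows "subseq (map ((!) \<sigma>) idx) (drop k \<sigma>)"
  using assms
proof (induction idx arbitrary: k)
  case (Cons i idx)
  have "subseq (map ((!) \<sigma>) idx) (drop (Suc i) \<sigma>)"
    using Cons.prems by (intro Cons.IH) auto
  then have "subseq (\<sigma> ! i # map ((!) \<sigma>) idx) (take (i - k) (drop k \<sigma>) @ \<sigma> ! i # drop (Suc i) \<sigma>)"
    by (simp add: list_emb_append2)
  also have "take (i - k) (drop k \<sigma>) @ \<sigma> ! i # drop (Suc i) \<sigma> = drop k \<sigma>"
  proof -
    have "k \<le> i" "i < length \<sigma>" using Cons.prems(2) by auto
    then have "drop (i - k) (drop k \<sigma>) = \<sigma> ! i # drop (Suc i) \<sigma>"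
      by (simp add: Cons_nth_drop_Suc)
    then show ?thesis by (metis append_take_drop_id)
  qed
  finally show ?case by simp
qed simp

lemma subseq_map_nth:
  "sorted_wrt (<) idx \<Longrightarrow> \<forall>j\<in>set idx. j < length \<sigma> \<Longrightarrow> subseq (map ((!) \<sigma>) idx) \<sigma>"
  using subseq_map_nth_drop[of idx 0 \<sigma>] by simp

lemma subseq_obtain_indices:
  assumes "subseq s \<sigma>"
  obtains idx where "sorted_wrt (<) idx" "\<forall>j\<in>set idx. j < length \<sigma>" "s = map ((!) \<sigma>) idx"
  using assms
proof (induction arbitrary: thesis rule: list_emb.induct)
  case (list_emb_Nil ys)
  then show ?case by force
next
  case (list_emb_Cons xs ys y)
  obtain idx where "sorted_wrt (<) idx" "\<forall>j\<in>set idx. j < length ys" "xs = map ((!) ys) idx"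
    by (rule list_emb_Cons.IH)
  then show ?case by (intro list_emb_Cons.prems[of "map Suc idx"]) (auto simp: sorted_wrt_map)
next
  case (list_emb_Cons2 x y xs ys)
  obtain idx where "sorted_wrt (<) idx" "\<forall>j\<in>set idx. j < length ys" "xs = map ((!) ys) idx"
    by (rule list_emb_Cons2.IH)
  then show ?case
    using list_emb_Cons2.hyps
    by (intro list_emb_Cons2.prems[of "0 # map Suc idx"]) (auto simp: sorted_wrt_map)
qed

lemma subseq_append3E:
  assumes "subseq s (pre @ q @ post)"
  obtains s\<^sub>1 s\<^sub>2 s\<^sub>3 where "s = s\<^sub>1 @ s\<^sub>2 @ s\<^sub>3" "subseq s\<^sub>1 pre" "subseq s\<^sub>2 q" "subseq s\<^sub>3 post"
  using assms by (auto simp: subseq_append_iff)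

lemma not_sorted_wrt_greater_obtain:
  fixes xs :: "'a::linorder list"
  assumes "distinct xs" "\<not> sorted_wrt (>) xs"
  obtains a b where "subseq [a, b] xs" "a < b"
proof -
  obtain i j where ij: "i < j" "j < length xs" "\<not> xs ! j < xs ! i"
    using assms(2) by (auto simp: sorted_wrt_iff_nth_less)
  then have "xs ! i \<noteq> xs ! j"
    using assms(1) by (simp add: nth_eq_iff_index_eq)
  moreover have "subseq (map ((!) xs) [i, j]) xs"
    using ij by (intro subseq_map_nth) auto
  ultimately show ?thesis
    using that[of "xs ! i" "xs ! j"] ij(3) by auto
qed

lemma contains_iff_subseq:
  "contains \<sigma> \<tau> \<longleftrightarrow> (\<exists>s. subseq s \<sigma> \<and> length s = length \<tau> \<and>
      (\<forall>a < length \<tau>. \<forall>b < length \<tau>. s!a < s!b \<longleftrightarrow> \<tau>!a < \<tau>!b))"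
proof
  assume "contains \<sigma> \<tau>"
  then obtain idx where "length idx = length \<tau>" "sorted_wrt (<) idx"
      "\<forall>j < length idx. idx!j < length \<sigma>"
      "\<forall>a < length \<tau>. \<forall>b < length \<tau>. \<sigma>!(idx!a) < \<sigma>!(idx!b) \<longleftrightarrow> \<tau>!a < \<tau>!b"
    unfolding contains_def by blast
  moreover from this have "subseq (map ((!) \<sigma>) idx) \<sigma>"
    by (intro subseq_map_nth) (auto simp: in_set_conv_nth)
  ultimately show "\<exists>s. subseq s \<sigma> \<and> length s = length \<tau> \<and>
      (\<forall>a < length \<tau>. \<forall>b < length \<tau>. s!a < s!b \<longleftrightarrow> \<tau>!a < \<tau>!b)"
    by (intro exI[of _ "map ((!) \<sigma>) idx"]) auto
next
  assume "\<exists>s. subseq s \<sigma> \<and> length s = length \<tau> \<and>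
      (\<forall>a < length \<tau>. \<forall>b < length \<tau>. s!a < s!b \<longleftrightarrow> \<tau>!a < \<tau>!b)"
  then obtain s where s: "subseq s \<sigma>" "length s = length \<tau>"
      "\<forall>a < length \<tau>. \<forall>b < length \<tau>. s!a < s!b \<longleftrightarrow> \<tau>!a < \<tau>!b"
    by blast
  obtain idx where "sorted_wrt (<) idx" "\<forall>j\<in>set idx. j < length \<sigma>" "s = map ((!) \<sigma>) idx"
    using s(1) by (rule subseq_obtain_indices)
  then show "contains \<sigma> \<tau>"
    unfolding contains_def using s(2,3) by (intro exI[of _ idx]) auto
qed

lemma contains_subseq_trans: "contains s \<tau> \<Longrightarrow> subseq s \<sigma> \<Longrightarrow> contains \<sigma> \<tau>"
  unfolding contains_iff_subseq by (meson subseq_order.order_trans)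

lemma not_contains_if_shorter: "length \<sigma> < length \<tau> \<Longrightarrow> \<not> contains \<sigma> \<tau>"
  unfolding contains_iff_subseq by (metis list_emb_length not_le)

lemma contains_length4_iff:
  "contains \<sigma> [t\<^sub>0, t\<^sub>1, t\<^sub>2, t\<^sub>3] \<longleftrightarrow> (\<exists>a b c d. subseq [a,b,c,d] \<sigma> \<and>
      (\<forall>i<4. \<forall>j<4. [a,b,c,d]!i < [a,b,c,d]!j \<longleftrightarrow> [t\<^sub>0, t\<^sub>1, t\<^sub>2, t\<^sub>3]!i < [t\<^sub>0, t\<^sub>1, t\<^sub>2, t\<^sub>3]!j))"
  unfolding contains_iff_subseq by (auto simp: length_Suc_conv numeral_eq_Suc)

lemma contains_2341_iff:
  "contains \<sigma> [2,3,4,1] \<longleftrightarrow> (\<exists>a b c d. subseq [a,b,c,d] \<sigma> \<and> d < a \<and> a < b \<and> b < c)"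
  unfolding contains_length4_iff
  by (simp add: numeral_eq_Suc All_less_Suc) (metis less_trans less_asym)

lemma contains_1423_iff:
  "contains \<sigma> [1,4,2,3] \<longleftrightarrow> (\<exists>a b c d. subseq [a,b,c,d] \<sigma> \<and> a < c \<and> c < d \<and> d < b)"
  unfolding contains_length4_iff
  by (simp add: numeral_eq_Suc All_less_Suc) (metis less_trans less_asym)

lemma contains_inflation:
  assumes \<tau>: "\<tau> \<in> {[2,3,4,1], [1,4,2,3]}" and "q \<noteq> []"
    and small: "\<forall>x\<in>set q. \<forall>y\<in>set (pre @ post). x < y"
    and "contains (pre @ q @ post) \<tau>"
  shows "contains q \<tau> \<or> (\<exists>z\<in>set q. contains (pre @ z # post) \<tau>)"
proof -
  from assms(4) obtain a b c d where occ: "subseq [a,b,c,d] (pre @ q @ post)"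
    and ord: "\<tau> = [2,3,4,1] \<and> d < a \<and> a < b \<and> b < c \<or> \<tau> = [1,4,2,3] \<and> a < c \<and> c < d \<and> d < b"
    using \<tau> assms(4) unfolding insert_iff empty_iff by (metis contains_2341_iff contains_1423_iff)
  from occ obtain s\<^sub>1 s\<^sub>2 s\<^sub>3 where split: "[a,b,c,d] = s\<^sub>1 @ s\<^sub>2 @ s\<^sub>3"
    and sub: "subseq s\<^sub>1 pre" "subseq s\<^sub>2 q" "subseq s\<^sub>3 post"
    by (rule subseq_append3E)
  have q_vals: "set s\<^sub>2 \<subseteq> set q" and frame_vals: "set s\<^sub>1 \<union> set s\<^sub>3 \<subseteq> set (pre @ post)"
    using sub by (auto dest!: set_mono_subseq)
  have "contains [a,b,c,d] \<tau>"
    using ord contains_2341_iff contains_1423_iff by (metis subseq_order.order_refl)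
  then have "contains (s\<^sub>1 @ s\<^sub>2 @ s\<^sub>3) \<tau>"
    by (simp only: split)
  show ?thesis
  proof (cases "length s\<^sub>2 \<le> 1")
    case True
    then obtain z where "z \<in> set q" "subseq s\<^sub>2 [z]"
      using \<open>q \<noteq> []\<close> q_vals by (cases s\<^sub>2) (auto intro: hd_in_set)
    then have "subseq (s\<^sub>1 @ s\<^sub>2 @ s\<^sub>3) (pre @ z # post)"
      using sub list_emb_append_mono[of _ s\<^sub>2 "[z]" s\<^sub>3 post] by (simp add: list_emb_append_mono)
    then show ?thesis
      using \<open>contains (s\<^sub>1 @ s\<^sub>2 @ s\<^sub>3) \<tau>\<close> \<open>z \<in> set q\<close> contains_subseq_trans by blast
  next
    case False
    \<comment> \<open>the entries from q form a consecutive block of the smallest values of the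
      occurrence; in 2341 and 1423 such a block with two entries is the whole pattern\<close>
    have dom: "\<forall>x\<in>set s\<^sub>2. \<forall>y\<in>set s\<^sub>1 \<union> set s\<^sub>3. x < y"
      using small q_vals frame_vals by blast
    obtain x y r where "s\<^sub>2 = x # y # r"
      using False by (cases s\<^sub>2; cases "tl s\<^sub>2") auto
    then have "s\<^sub>1 = [] \<and> s\<^sub>3 = []"
      using split dom ord by (auto simp: Cons_eq_append_conv append_eq_Cons_conv)
    then show ?thesis
      using \<open>contains (s\<^sub>1 @ s\<^sub>2 @ s\<^sub>3) \<tau>\<close> sub(2) contains_subseq_trans by auto
  qed
qed

definition dumont_step :: "nat \<Rightarrow> nat \<Rightarrow> bool" where
  "dumont_step x y \<longleftrightarrow> (if even x then y < x else x < y)"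

definition dumont_shape :: "nat list \<Rightarrow> bool" where
  "dumont_shape p \<longleftrightarrow> successively dumont_step p \<and> (p \<noteq> [] \<longrightarrow> odd (last p))"

lemma dumont1_iff: "dumont1 n p \<longleftrightarrow> is_perm (2 * n) p \<and> dumont_shape p"
proof (cases "is_perm (2 * n) p")
  case True
  then have len: "length p = 2 * n" by (simp add: is_perm_def)
  have "(\<forall>i < 2*n. (even (p!i) \<longrightarrow> i + 1 < 2*n \<and> p!i > p!(i+1)) \<and>
                  (odd (p!i) \<longrightarrow> i + 1 = 2*n \<or> p!i < p!(i+1)))
    \<longleftrightarrow> (\<forall>i. Suc i < length p \<longrightarrow> dumont_step (p!i) (p!Suc i)) \<and> (p \<noteq> [] \<longrightarrow> odd (last p))"
    (is "?nth \<longleftrightarrow> ?list")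
  proof
    assume nth: ?nth
    have "dumont_step (p!i) (p!Suc i)" if "Suc i < length p" for i
      using nth[rule_format, of i] that len by (auto simp: dumont_step_def)
    moreover have "odd (last p)" if "p \<noteq> []"
    proof -
      have "n > 0" using that len by (cases n) auto
      then have "last p = p ! (2*n - 1)" "2*n - 1 < 2*n" "\<not> 2*n - 1 + 1 < 2*n"
        using that len by (auto simp: last_conv_nth)
      then show ?thesis using nth[rule_format, of "2*n - 1"] by auto
    qed
    ultimately show ?list by blast
  next
    assume ?list
    show ?nth
    proof (intro allI impI)
      fix i assume "i < 2 * n"
      show "(even (p!i) \<longrightarrow> i + 1 < 2*n \<and> p!i > p!(i+1)) \<and> (odd (p!i) \<longrightarrow> i + 1 = 2*n \<or> p!i < p!(i+1))"
      proof (cases "i + 1 < 2 * n")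
        case True
        then show ?thesis using \<open>?list\<close> len by (auto simp: dumont_step_def)
      next
        case False
        then have "i = length p - 1" "p \<noteq> []" using \<open>i < 2 * n\<close> len by auto
        then have "last p = p ! i" by (simp add: last_conv_nth)
        then show ?thesis using \<open>?list\<close> False \<open>i < 2 * n\<close> len by auto
      qed
    qed
  qed
  then show ?thesis
    using True unfolding dumont1_def dumont_shape_def successively_conv_nth by simp
qed (simp add: dumont1_def)

lemma dumont_shape_even_descent:
  "dumont_shape (xs @ x # ys) \<Longrightarrow> even x \<Longrightarrow> ys \<noteq> [] \<and> hd ys < x"
  by (cases ys) (auto simp: dumont_shape_def dumont_step_def successively_append_iff)

lemma dumont_shape_odd_ascent:
  "dumont_shape (xs @ x # ys) \<Longrightarrow> odd x \<Longrightarrow> ys \<noteq> [] \<Longrightarrow> x < hd ys"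
  by (cases ys) (auto simp: dumont_shape_def dumont_step_def successively_append_iff)

lemma dumont_shape_infix:
  assumes "dumont_shape (pre @ q @ post)" "\<forall>x\<in>set q. \<forall>y\<in>set post. x < y"
  shows "dumont_shape q"
proof (cases "q = []")
  case False
  have "odd (last q)"
  proof (cases post)
    case Nil
    then show ?thesis using assms(1) False by (simp add: dumont_shape_def)
  next
    case (Cons y ys)
    then have "last q < hd post" using assms(2) False by simp
    then show ?thesis
      using dumont_shape_even_descent[of "pre @ butlast q" "last q" post] assms(1) False
      by (metis append.assoc append_butlast_last_id append_Cons append_Nil not_less_iff_gr_or_eq)
  qed
  then show ?thesis
    using assms(1) by (simp add: dumont_shape_def successively_append_iff)
qed (simp add: dumont_shape_def)

lemma dumont_shape_frame:
  assumes "dumont_shape q" "q \<noteq> []" "successively dumont_step (pre @ [hd q])" "dumont_shape post"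
    "\<forall>x\<in>set q. \<forall>y\<in>set post. x < y"
  shows "dumont_shape (pre @ q @ post)"
  using assms by (cases post) (auto simp: dumont_shape_def dumont_step_def successively_append_iff)

definition dumont_avoiders :: "nat \<Rightarrow> nat list set" where
  "dumont_avoiders n = Dumont1_avoid n {[2,3,4,1], [1,4,2,3]}"

lemma mem_dumont_avoiders_iff:
  "p \<in> dumont_avoiders n \<longleftrightarrow> length p = 2 * n \<and> distinct p \<and> set p = {1..2 * n} \<and> dumont_shape p \<and>
      \<not> contains p [2,3,4,1] \<and> \<not> contains p [1,4,2,3]"
  by (auto simp: dumont_avoiders_def Dumont1_avoid_def dumont1_iff is_perm_def avoids_def)

lemma finite_dumont_avoiders: "finite (dumont_avoiders n)"
proof (rule finite_subset)
  show "dumont_avoiders n \<subseteq> {p. set p \<subseteq> {1..2 * n} \<and> length p = 2 * n}"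
    by (auto simp: mem_dumont_avoiders_iff)
qed (simp add: finite_lists_length_eq)

lemma dumont_avoiders_0: "dumont_avoiders 0 = {[]}"
  by (auto simp: mem_dumont_avoiders_iff dumont_shape_def not_contains_if_shorter)

lemma dumont_avoiders_1: "dumont_avoiders 1 = {[2, 1]}"
proof -
  have "p = [2, 1]" if "p \<in> dumont_avoiders 1" for p
  proof -
    have P: "length p = 2" "set p = {1..2}" "distinct p" "dumont_shape p"
      using that unfolding mem_dumont_avoiders_iff by simp_all
    then obtain a b where p: "p = [a, b]"
      by (metis length_0_conv length_Suc_conv numeral_2_eq_2)
    then have "odd b" "a \<noteq> b" "a \<in> {1..2}" "b \<in> {1..2}"
      using P by (auto simp: dumont_shape_def)
    then show ?thesis
      using p by (auto; presburger)
  qed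
  moreover have "[2, 1] \<in> dumont_avoiders 1"
    unfolding mem_dumont_avoiders_iff
    by (auto simp: dumont_shape_def dumont_step_def not_contains_if_shorter)
  ultimately show ?thesis
    by blast
qed

lemma Nil_notin_dumont_avoiders: "n \<ge> 1 \<Longrightarrow> [] \<notin> dumont_avoiders n"
  by (simp add: mem_dumont_avoiders_iff)

lemma frame_in_dumont_avoiders:
  assumes q: "q \<in> dumont_avoiders k" "k \<ge> 1"
    and frame: "distinct (pre @ post)" "set (pre @ post) = {2 * k<..2 * (k + j)}"
    and shape: "successively dumont_step (pre @ [hd q])" "dumont_shape post"
    and avoid: "\<And>z \<tau>. z \<in> set q \<Longrightarrow> \<tau> \<in> {[2,3,4,1], [1,4,2,3]} \<Longrightarrow> \<not> contains (pre @ z # post) \<tau>"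
  shows "pre @ q @ post \<in> dumont_avoiders (k + j)"
proof -
  note q_props = q(1)[unfolded mem_dumont_avoiders_iff]
  have "q \<noteq> []" using q_props q(2) by auto
  have small: "\<forall>x\<in>set q. \<forall>y\<in>set (pre @ post). x < y"
    using q_props frame(2) by auto
  have "set (pre @ q @ post) = set q \<union> set (pre @ post)"
    by auto
  also have "\<dots> = {1..2 * (k + j)}"
    using q_props frame(2) by auto
  finally have "set (pre @ q @ post) = {1..2 * (k + j)}" .
  moreover have "length (pre @ post) = 2 * j"
    using distinct_card[OF frame(1)] frame(2) by simp
  moreover have "distinct (pre @ q @ post)"
  proof -
    have "set q \<inter> set (pre @ post) = {}"
      using small by force
    then show ?thesis using q_props frame(1) by auto
  qed
  moreover have "dumont_shape (pre @ q @ post)"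
    using q_props small \<open>q \<noteq> []\<close> shape by (intro dumont_shape_frame) auto
  moreover have "\<not> contains (pre @ q @ post) \<tau>" if "\<tau> \<in> {[2,3,4,1], [1,4,2,3]}" for \<tau>
    using contains_inflation[OF that \<open>q \<noteq> []\<close> small] avoid[OF _ that] q_props that by auto
  ultimately show ?thesis
    using q_props by (simp add: mem_dumont_avoiders_iff)
qed

lemma infix_in_dumont_avoiders:
  assumes p: "pre @ q @ post \<in> dumont_avoiders (k + j)"
    and frame: "set (pre @ post) = {2 * k<..2 * (k + j)}"
  shows "q \<in> dumont_avoiders k"
proof -
  note p_props = p[unfolded mem_dumont_avoiders_iff]
  have "set q = set (pre @ q @ post) - set (pre @ post)"
    using p_props by auto
  also have "\<dots> = {1..2 * k}"
    using p_props frame by auto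
  finally have "set q = {1..2 * k}" .
  moreover have "distinct q"
    using p_props by simp
  moreover from calculation have "length q = 2 * k"
    using distinct_card by fastforce
  moreover have "dumont_shape q"
    using p_props frame \<open>set q = {1..2 * k}\<close> by (intro dumont_shape_infix[of pre q post]) auto
  moreover have "subseq q (pre @ q @ post)"
    by blast
  ultimately show ?thesis
    using p_props by (auto simp: mem_dumont_avoiders_iff dest: contains_subseq_trans)
qed

lemma top_pair_extensions_in_dumont_avoiders:
  assumes "q \<in> dumont_avoiders (n + 1)"
  shows "q @ [2 * n + 4, 2 * n + 3] \<in> dumont_avoiders (n + 2)"
    and "[2 * n + 3, 2 * n + 4] @ q \<in> dumont_avoiders (n + 2)"
    and "(2 * n + 4) # q @ [2 * n + 3] \<in> dumont_avoiders (n + 2)"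
proof -
  have "hd q \<in> set q"
    using assms by (intro hd_in_set) (auto simp: mem_dumont_avoiders_iff)
  then have hd_small: "hd q < 2 * n + 3"
    using assms by (auto simp: mem_dumont_avoiders_iff)
  have "[] @ q @ [2 * n + 4, 2 * n + 3] \<in> dumont_avoiders (n + 1 + 1)"
    by (rule frame_in_dumont_avoiders[OF assms])
      (auto simp: dumont_shape_def dumont_step_def not_contains_if_shorter)
  then show "q @ [2 * n + 4, 2 * n + 3] \<in> dumont_avoiders (n + 2)"
    by simp
  have "[2 * n + 3, 2 * n + 4] @ q @ [] \<in> dumont_avoiders (n + 1 + 1)"
    by (rule frame_in_dumont_avoiders[OF assms])
      (use hd_small in \<open>auto simp: dumont_shape_def dumont_step_def not_contains_if_shorter\<close>)
  then show "[2 * n + 3, 2 * n + 4] @ q \<in> dumont_avoiders (n + 2)"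
    by simp
  have "[2 * n + 4] @ q @ [2 * n + 3] \<in> dumont_avoiders (n + 1 + 1)"
    by (rule frame_in_dumont_avoiders[OF assms])
      (use hd_small in \<open>auto simp: dumont_shape_def dumont_step_def not_contains_if_shorter\<close>)
  then show "(2 * n + 4) # q @ [2 * n + 3] \<in> dumont_avoiders (n + 2)"
    by simp
qed

lemma top_four_extensions_in_dumont_avoiders:
  assumes "r \<in> dumont_avoiders n" "r \<noteq> []"
  shows "r @ [2 * n + 3, 2 * n + 4, 2 * n + 2, 2 * n + 1] \<in> dumont_avoiders (n + 2)"
    and "[2 * n + 2, 2 * n + 1, 2 * n + 4] @ r @ [2 * n + 3] \<in> dumont_avoiders (n + 2)"
proof -
  have "n \<ge> 1"
    using assms by (cases n) (auto simp: mem_dumont_avoiders_iff)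
  have r_vals: "\<forall>z\<in>set r. z \<le> 2 * n" and "hd r \<in> set r"
    using assms by (auto simp: mem_dumont_avoiders_iff)
  have avoid: "\<not> contains (z # [2 * n + 3, 2 * n + 4, 2 * n + 2, 2 * n + 1]) \<tau>
      \<and> \<not> contains ([2 * n + 2, 2 * n + 1, 2 * n + 4] @ z # [2 * n + 3]) \<tau>"
    if "z \<in> set r" "\<tau> \<in> {[2,3,4,1], [1,4,2,3]}" for z \<tau>
  proof -
    have "z \<le> 2 * n"
      using r_vals that(1) by simp
    then have "\<not> contains (z # [2 * n + 3, 2 * n + 4, 2 * n + 2, 2 * n + 1]) [2,3,4,1]
      \<and> \<not> contains ([2 * n + 2, 2 * n + 1, 2 * n + 4] @ z # [2 * n + 3]) [2,3,4,1]
      \<and> \<not> contains (z # [2 * n + 3, 2 * n + 4, 2 * n + 2, 2 * n + 1]) [1,4,2,3]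
      \<and> \<not> contains ([2 * n + 2, 2 * n + 1, 2 * n + 4] @ z # [2 * n + 3]) [1,4,2,3]"
      unfolding contains_2341_iff contains_1423_iff by (simp add: subseq_Cons_Cons_iff)
    then show ?thesis using that(2) by blast
  qed
  have "[] @ r @ [2 * n + 3, 2 * n + 4, 2 * n + 2, 2 * n + 1] \<in> dumont_avoiders (n + 2)"
    by (rule frame_in_dumont_avoiders[OF assms(1) \<open>n \<ge> 1\<close>])
      (use avoid in \<open>auto simp: dumont_shape_def dumont_step_def\<close>)
  then show "r @ [2 * n + 3, 2 * n + 4, 2 * n + 2, 2 * n + 1] \<in> dumont_avoiders (n + 2)"
    by simp
  show "[2 * n + 2, 2 * n + 1, 2 * n + 4] @ r @ [2 * n + 3] \<in> dumont_avoiders (n + 2)"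
    by (rule frame_in_dumont_avoiders[OF assms(1) \<open>n \<ge> 1\<close>])
      (use avoid r_vals \<open>hd r \<in> set r\<close> in \<open>auto simp: dumont_shape_def dumont_step_def\<close>)
qed

lemma decreasing_block_eq_top_two:
  assumes dec: "sorted_wrt (>) bs" and "bs \<noteq> []"
    and dom: "\<forall>b\<in>set bs. \<forall>c\<in>set cs. c < b"
    and vals: "set bs \<union> set cs = {1..2 * k}" and "k \<ge> 1"
    and shape: "dumont_shape (bs @ tail)" and tail: "tail = [] \<or> hd tail > 2 * k"
  shows "bs = [2 * k, 2 * k - 1]"
proof -
  obtain x bs' where bs: "bs = x # bs'"
    using \<open>bs \<noteq> []\<close> by (cases bs) auto
  have "2 * k \<in> set bs \<union> set cs" "2 * k - 1 \<in> set bs \<union> set cs"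
    using vals \<open>k \<ge> 1\<close> by auto
  have "x \<le> 2 * k"
    using vals bs by auto
  moreover have "2 * k \<le> x"
    using \<open>2 * k \<in> set bs \<union> set cs\<close> dec dom bs by (auto intro: less_imp_le)
  ultimately have "x = 2 * k"
    by simp
  then obtain y bs'' where bs': "bs' = y # bs''"
    using dumont_shape_even_descent[of "[]" x "bs' @ tail"] shape tail bs by (cases bs') auto
  have "y < 2 * k"
    using dec bs bs' \<open>x = 2 * k\<close> by simp
  moreover have "2 * k - 1 \<le> y"
    using \<open>2 * k - 1 \<in> set bs \<union> set cs\<close> \<open>x = 2 * k\<close> \<open>k \<ge> 1\<close> dec dom bs bs'
    by (auto intro: less_imp_le)
  ultimately have "y = 2 * k - 1"
    by simp
  moreover have "bs'' = []"
  proof (rule ccontr)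
    assume "bs'' \<noteq> []"
    then have "y < hd bs''"
      using dumont_shape_odd_ascent[of "[x]" y "bs'' @ tail"] shape bs bs' \<open>y = 2 * k - 1\<close> \<open>k \<ge> 1\<close>
      by auto
    then show False
      using dec bs bs' hd_in_set[OF \<open>bs'' \<noteq> []\<close>] by auto
  qed
  ultimately show ?thesis
    using bs bs' \<open>x = 2 * k\<close> by simp
qed

lemma dumont_avoiders_top_pair_cases:
  assumes p: "p \<in> dumont_avoiders (n + 1)"
  obtains (apart) us ws where "p = us @ (2 * n + 2) # ws @ [2 * n + 1]"
    | (adjacent) us vs where "p = us @ [2 * n + 1, 2 * n + 2] @ vs"
proof -
  note P = p[unfolded mem_dumont_avoiders_iff]
  have top: "x = 2 * n + 2" if "x \<in> set p" "2 * n + 1 < x" for x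
    using P that by auto
  have "2 * n + 2 \<in> set p"
    using P by simp
  then obtain us vs where p_eq: "p = us @ (2 * n + 2) # vs"
    by (meson split_list)
  have "2 * n + 1 \<in> set p"
    using P by simp
  then have "2 * n + 1 \<in> set us \<or> 2 * n + 1 \<in> set vs"
    using p_eq by auto
  then show thesis
  proof
    assume "2 * n + 1 \<in> set vs"
    then obtain ws ys where vs: "vs = ws @ (2 * n + 1) # ys"
      by (meson split_list)
    have "ys = []"
    proof (rule ccontr)
      assume "ys \<noteq> []"
      then have "2 * n + 1 < hd ys"
        using dumont_shape_odd_ascent[of "us @ (2 * n + 2) # ws" "2 * n + 1" ys] P p_eq vs by simp
      then have "hd ys = 2 * n + 2"
        using top \<open>ys \<noteq> []\<close> p_eq vs by simp
      then show False
        using P p_eq vs \<open>ys \<noteq> []\<close> hd_in_set[of ys] by auto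
    qed
    then show thesis
      using apart p_eq vs by simp
  next
    assume "2 * n + 1 \<in> set us"
    then obtain xs ys where us: "us = xs @ (2 * n + 1) # ys"
      by (meson split_list)
    have "ys = []"
    proof (rule ccontr)
      assume "ys \<noteq> []"
      then have "2 * n + 1 < hd ys"
        using dumont_shape_odd_ascent[of xs "2 * n + 1" "ys @ (2 * n + 2) # vs"] P p_eq us by simp
      then have "hd ys = 2 * n + 2"
        using top \<open>ys \<noteq> []\<close> p_eq us by simp
      then show False
        using P p_eq us \<open>ys \<noteq> []\<close> hd_in_set[of ys] by auto
    qed
    then show thesis
      using adjacent p_eq us by simp
  qed
qed

lemma set_dumont_avoiders_minus_top_pair:
  assumes "p \<in> dumont_avoiders (n + 2)" "set p = A \<union> {2 * n + 3, 2 * n + 4}"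
    "2 * n + 3 \<notin> A" "2 * n + 4 \<notin> A"
  shows "A = {1..2 * (n + 1)}"
proof -
  have "A = set p - {2 * n + 3, 2 * n + 4}"
    using assms(2-4) by auto
  also have "set p = {1..2 * (n + 2)}"
    using assms(1) by (simp add: mem_dumont_avoiders_iff)
  also have "{1..2 * (n + 2)} - {2 * n + 3, 2 * n + 4} = {1..2 * (n + 1)}"
    by auto
  finally show ?thesis .
qed

lemma dumont_avoiders_top_apart_prefix_eq:
  assumes p: "us @ (2 * n + 4) # ws @ [2 * n + 3] \<in> dumont_avoiders (n + 2)" and "us \<noteq> []" "ws \<noteq> []"
  shows "us = [2 * n + 2, 2 * n + 1]"
proof -
  note P = p[unfolded mem_dumont_avoiders_iff]
  have "distinct (us @ (2 * n + 4) # ws @ [2 * n + 3])"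
    using P by simp
  then have vals: "set us \<union> set ws = {1..2 * (n + 1)}"
    by (intro set_dumont_avoiders_minus_top_pair[OF p]) auto
  then have "set us \<subseteq> {1..2 * (n + 1)}" "set ws \<subseteq> {1..2 * (n + 1)}"
    by blast+
  then have below: "\<forall>x\<in>set us. x < 2 * n + 3" "\<forall>x\<in>set ws. x < 2 * n + 3"
    by auto
  have dom: "\<forall>a\<in>set us. \<forall>c\<in>set ws. c < a"
  proof (intro ballI, rule ccontr)
    fix a c assume ac: "a \<in> set us" "c \<in> set ws" "\<not> c < a"
    moreover have "a \<noteq> c"
      using P ac by auto
    ultimately have "a < c"
      by simp
    have "subseq ([a] @ [2 * n + 4] @ [c] @ [2 * n + 3]) (us @ [2 * n + 4] @ ws @ [2 * n + 3])"
      using ac by (intro list_emb_append_mono) (auto simp: subseq_singleton_left)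
    then have "contains (us @ (2 * n + 4) # ws @ [2 * n + 3]) [1,4,2,3]"
      unfolding contains_1423_iff using \<open>a < c\<close> below ac by fastforce
    then show False
      using P by simp
  qed
  have "sorted_wrt (>) us"
  proof (rule ccontr)
    assume "\<not> sorted_wrt (>) us"
    then obtain a b where ab: "subseq [a, b] us" "a < b"
      using P by (auto elim: not_sorted_wrt_greater_obtain)
    obtain d where "d \<in> set ws"
      using \<open>ws \<noteq> []\<close> by fastforce
    have "subseq ([a, b] @ [2 * n + 4] @ [d]) (us @ [2 * n + 4] @ ws @ [2 * n + 3])"
      using ab \<open>d \<in> set ws\<close> by (intro list_emb_append_mono) (auto simp: subseq_singleton_left)
    moreover have "d < a" "b < 2 * n + 3"
      using dom below ab \<open>d \<in> set ws\<close> by (auto dest!: set_mono_subseq)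
    ultimately have "contains (us @ (2 * n + 4) # ws @ [2 * n + 3]) [2,3,4,1]"
      unfolding contains_2341_iff using ab by fastforce
    then show False
      using P by simp
  qed
  moreover have "dumont_shape (us @ (2 * n + 4) # ws @ [2 * n + 3])"
    using P by simp
  ultimately show ?thesis
    using decreasing_block_eq_top_two[of us ws "n + 1" "(2 * n + 4) # ws @ [2 * n + 3]"]
      \<open>us \<noteq> []\<close> dom vals
    by simp
qed

lemma dumont_avoiders_top_adjacent_suffix_eq:
  assumes p: "us @ [2 * n + 3, 2 * n + 4] @ vs \<in> dumont_avoiders (n + 2)" and "us \<noteq> []"
  shows "vs = [2 * n + 2, 2 * n + 1]"
proof -
  note P = p[unfolded mem_dumont_avoiders_iff]
  have "distinct (us @ [2 * n + 3, 2 * n + 4] @ vs)"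
    using P by simp
  then have vals: "set vs \<union> set us = {1..2 * (n + 1)}"
    by (intro set_dumont_avoiders_minus_top_pair[OF p]) auto
  then have "set us \<subseteq> {1..2 * (n + 1)}" "set vs \<subseteq> {1..2 * (n + 1)}"
    by blast+
  then have below: "\<forall>x\<in>set us. x < 2 * n + 3" "\<forall>x\<in>set vs. x < 2 * n + 3"
    by auto
  have dom: "\<forall>d\<in>set vs. \<forall>a\<in>set us. a < d"
  proof (intro ballI, rule ccontr)
    fix d a assume da: "d \<in> set vs" "a \<in> set us" "\<not> a < d"
    moreover have "a \<noteq> d"
      using P da by auto
    ultimately have "d < a"
      by simp
    have "subseq ([a] @ [2 * n + 3, 2 * n + 4] @ [d]) (us @ [2 * n + 3, 2 * n + 4] @ vs)"
      using da by (intro list_emb_append_mono) (auto simp: subseq_singleton_left)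
    then have "contains (us @ [2 * n + 3, 2 * n + 4] @ vs) [2,3,4,1]"
      unfolding contains_2341_iff using \<open>d < a\<close> below da by fastforce
    then show False
      using P by simp
  qed
  have "sorted_wrt (>) vs"
  proof (rule ccontr)
    assume "\<not> sorted_wrt (>) vs"
    then obtain c d where cd: "subseq [c, d] vs" "c < d"
      using P by (auto elim: not_sorted_wrt_greater_obtain)
    obtain a where "a \<in> set us"
      using \<open>us \<noteq> []\<close> by fastforce
    have "subseq ([a] @ [2 * n + 4] @ [c, d]) (us @ [2 * n + 3, 2 * n + 4] @ vs)"
      using cd \<open>a \<in> set us\<close> by (intro list_emb_append_mono) (auto simp: subseq_singleton_left)
    moreover have "a < c" "d < 2 * n + 3"
      using dom below cd \<open>a \<in> set us\<close> by (auto dest!: set_mono_subseq)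
    ultimately have "contains (us @ [2 * n + 3, 2 * n + 4] @ vs) [1,4,2,3]"
      unfolding contains_1423_iff using cd by fastforce
    then show False
      using P by simp
  qed
  moreover have "vs \<noteq> []"
    using dumont_shape_even_descent[of "us @ [2 * n + 3]" "2 * n + 4" vs] P by simp
  moreover have "dumont_shape (vs @ [])"
    using dumont_shape_infix[of "us @ [2 * n + 3, 2 * n + 4]" vs "[]"] P by simp
  ultimately show ?thesis
    using decreasing_block_eq_top_two[of vs us "n + 1" "[]"] dom vals
    by simp
qed

(* For n = 0 the empty r has to be excluded: it would give [3,4,2,1] and [2,1,4,3], which are
   already members of the second and the first family. *)
lemma dumont_avoiders_add_two_eq:
  "dumont_avoiders (n + 2) =
     (\<lambda>q. q @ [2 * n + 4, 2 * n + 3]) ` dumont_avoiders (n + 1)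
   \<union> (\<lambda>q. [2 * n + 3, 2 * n + 4] @ q) ` dumont_avoiders (n + 1)
   \<union> (\<lambda>q. (2 * n + 4) # q @ [2 * n + 3]) ` dumont_avoiders (n + 1)
   \<union> (\<lambda>r. r @ [2 * n + 3, 2 * n + 4, 2 * n + 2, 2 * n + 1]) ` (dumont_avoiders n - {[]})
   \<union> (\<lambda>r. [2 * n + 2, 2 * n + 1, 2 * n + 4] @ r @ [2 * n + 3]) ` (dumont_avoiders n - {[]})"
  (is "_ = ?A \<union> ?B \<union> ?C \<union> ?D \<union> ?E")
proof
  show "?A \<union> ?B \<union> ?C \<union> ?D \<union> ?E \<subseteq> dumont_avoiders (n + 2)"
    using top_pair_extensions_in_dumont_avoiders top_four_extensions_in_dumont_avoiders by blast
next
  show "dumont_avoiders (n + 2) \<subseteq> ?A \<union> ?B \<union> ?C \<union> ?D \<union> ?E"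
  proof
    fix p assume p: "p \<in> dumont_avoiders (n + 2)"
    then have "p \<in> dumont_avoiders (n + 1 + 1)"
      by simp
    then show "p \<in> ?A \<union> ?B \<union> ?C \<union> ?D \<union> ?E"
    proof (cases rule: dumont_avoiders_top_pair_cases)
      case (apart us ws)
      then have p_eq: "p = us @ (2 * n + 4) # ws @ [2 * n + 3]"
        by simp
      consider "ws = []" | "us = []" | "us \<noteq> []" "ws \<noteq> []"
        by blast
      then show ?thesis
      proof cases
        case 1
        have "us \<in> dumont_avoiders (n + 1)"
          by (rule infix_in_dumont_avoiders[of "[]" us "[2 * n + 4, 2 * n + 3]" "n + 1" 1])
            (use p p_eq 1 in auto)
        then show ?thesis using p_eq 1 by blast
      next
        case 2
        have "ws \<in> dumont_avoiders (n + 1)"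
          by (rule infix_in_dumont_avoiders[of "[2 * n + 4]" ws "[2 * n + 3]" "n + 1" 1])
            (use p p_eq 2 in auto)
        then show ?thesis using p_eq 2 by blast
      next
        case 3
        then have us: "us = [2 * n + 2, 2 * n + 1]"
          using dumont_avoiders_top_apart_prefix_eq p p_eq by blast
        have "ws \<in> dumont_avoiders n"
          by (rule infix_in_dumont_avoiders[of "[2 * n + 2, 2 * n + 1, 2 * n + 4]" ws "[2 * n + 3]" n 2])
            (use p p_eq us in auto)
        moreover have "p = [2 * n + 2, 2 * n + 1, 2 * n + 4] @ ws @ [2 * n + 3]"
          using p_eq us by simp
        ultimately show ?thesis using 3 by blast
      qed
    next
      case (adjacent us vs)
      then have p_eq: "p = us @ [2 * n + 3, 2 * n + 4] @ vs"
        by simp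
      show ?thesis
      proof (cases "us = []")
        case True
        have "vs \<in> dumont_avoiders (n + 1)"
          by (rule infix_in_dumont_avoiders[of "[2 * n + 3, 2 * n + 4]" vs "[]" "n + 1" 1])
            (use p p_eq True in auto)
        then show ?thesis using p_eq True by blast
      next
        case False
        then have vs: "vs = [2 * n + 2, 2 * n + 1]"
          using dumont_avoiders_top_adjacent_suffix_eq p p_eq by blast
        have "us \<in> dumont_avoiders n"
          by (rule infix_in_dumont_avoiders[of "[]" us "[2 * n + 3, 2 * n + 4, 2 * n + 2, 2 * n + 1]" n 2])
            (use p p_eq vs in auto)
        moreover have "p = us @ [2 * n + 3, 2 * n + 4, 2 * n + 2, 2 * n + 1]"
          using p_eq vs by simp
        ultimately show ?thesis using False by blast
      qed
    qed
  qed
qed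

lemma length_takeWhile_neq_append:
  "m \<notin> set xs \<Longrightarrow>
    length (takeWhile (\<lambda>x. x \<noteq> m) (xs @ ys)) = length xs + length (takeWhile (\<lambda>x. x \<noteq> m) ys)"
  by (induction xs) auto

lemma card_dumont_avoiders_add_two:
  "card (dumont_avoiders (n + 2)) =
    3 * card (dumont_avoiders (n + 1)) + 2 * card (dumont_avoiders n - {[]})"
proof -
  define A where "A = (\<lambda>q. q @ [2 * n + 4, 2 * n + 3]) ` dumont_avoiders (n + 1)"
  define B where "B = (\<lambda>q. [2 * n + 3, 2 * n + 4] @ q) ` dumont_avoiders (n + 1)"
  define C where "C = (\<lambda>q. (2 * n + 4) # q @ [2 * n + 3]) ` dumont_avoiders (n + 1)"
  define D where
    "D = (\<lambda>r. r @ [2 * n + 3, 2 * n + 4, 2 * n + 2, 2 * n + 1]) ` (dumont_avoiders n - {[]})"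
  define E where
    "E = (\<lambda>r. [2 * n + 2, 2 * n + 1, 2 * n + 4] @ r @ [2 * n + 3]) ` (dumont_avoiders n - {[]})"
  \<comment> \<open>the five families are separated by the position of the maximum\<close>
  define pos where "pos p = length (takeWhile (\<lambda>x. x \<noteq> 2 * n + 4) p)" for p :: "nat list"
  have "n \<ge> 1" if "r \<in> dumont_avoiders n - {[]}" for r
    using that by (cases n) (auto simp: dumont_avoiders_0)
  then have "\<forall>p\<in>A. pos p = 2 * n + 2" "\<forall>p\<in>B. pos p = 1" "\<forall>p\<in>C. pos p = 0"
    "\<forall>p\<in>D. pos p = 2 * n + 1 \<and> n \<ge> 1" "\<forall>p\<in>E. pos p = 2 \<and> n \<ge> 1"
    by (auto simp: A_def B_def C_def D_def E_def pos_def mem_dumont_avoiders_iff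
        length_takeWhile_neq_append)
  then have "A \<inter> B = {}" "(A \<union> B) \<inter> C = {}" "(A \<union> B \<union> C) \<inter> D = {}" "(A \<union> B \<union> C \<union> D) \<inter> E = {}"
    by fastforce+
  moreover have "finite A" "finite B" "finite C" "finite D" "finite E"
    by (simp_all add: A_def B_def C_def D_def E_def finite_dumont_avoiders)
  ultimately have "card (dumont_avoiders (n + 2)) = card A + card B + card C + card D + card E"
    unfolding dumont_avoiders_add_two_eq
      A_def[symmetric] B_def[symmetric] C_def[symmetric] D_def[symmetric] E_def[symmetric]
    by (simp add: card_Un_disjoint)
  also have "\<dots> = 3 * card (dumont_avoiders (n + 1)) + 2 * card (dumont_avoiders n - {[]})"
    by (simp add: A_def B_def C_def D_def E_def card_image inj_on_def)
  finally show ?thesis .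
qed

lemma linear_recurrence_closed_form:
  fixes u :: "nat \<Rightarrow> real" and a b \<phi> \<psi> :: real
  assumes roots: "\<phi>\<^sup>2 = a * \<phi> + b" "\<psi>\<^sup>2 = a * \<psi> + b" "\<phi> \<noteq> \<psi>"
    and init: "u 0 = 0" "u 1 = 1" and rec: "\<And>n. u (n + 2) = a * u (n + 1) + b * u n"
  shows "u n = (\<phi> ^ n - \<psi> ^ n) / (\<phi> - \<psi>)"
proof (induction n rule: induct_nat_012)
  case (ge2 n)
  have power_rec: "x ^ (n + 2) = a * x ^ (n + 1) + b * x ^ n" if "x\<^sup>2 = a * x + b" for x :: real
  proof -
    have "x ^ (n + 2) = x ^ n * x\<^sup>2"
      by (rule power_add)
    also have "\<dots> = x ^ n * (a * x + b)"
      by (simp only: that)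
    finally show ?thesis
      by (simp add: algebra_simps)
  qed
  have "u (n + 2) = (a * (\<phi> ^ (n + 1) - \<psi> ^ (n + 1)) + b * (\<phi> ^ n - \<psi> ^ n)) / (\<phi> - \<psi>)"
    using rec[of n] ge2 by (simp add: add_divide_distrib)
  also have "\<dots> = (\<phi> ^ (n + 2) - \<psi> ^ (n + 2)) / (\<phi> - \<psi>)"
    using power_rec[OF roots(1)] power_rec[OF roots(2)] by (simp add: algebra_simps)
  finally show ?case
    by simp
qed (use init roots(3) in simp_all)

lemma card_dumont_avoiders_closed_form:
  "real (card (dumont_avoiders n - {[]})) =
    (((3 + sqrt 17) / 2) ^ n - ((3 - sqrt 17) / 2) ^ n) / sqrt 17"
proof -
  let ?\<phi> = "(3 + sqrt 17) / 2" and ?\<psi> = "(3 - sqrt 17) / 2"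
  have "real (card (dumont_avoiders n - {[]})) = (?\<phi> ^ n - ?\<psi> ^ n) / (?\<phi> - ?\<psi>)"
  proof (rule linear_recurrence_closed_form[where a = 3 and b = 2])
    show "?\<phi>\<^sup>2 = 3 * ?\<phi> + 2" "?\<psi>\<^sup>2 = 3 * ?\<psi> + 2"
      by (simp_all add: power2_eq_square field_simps)
    show "real (card (dumont_avoiders (n + 2) - {[]})) =
        3 * real (card (dumont_avoiders (n + 1) - {[]})) + 2 * real (card (dumont_avoiders n - {[]}))"
      for n
      using card_dumont_avoiders_add_two[of n]
        Nil_notin_dumont_avoiders[of "n + 1"] Nil_notin_dumont_avoiders[of "n + 2"]
      by simp
    show "real (card (dumont_avoiders 1 - {[]})) = 1"
      unfolding dumont_avoiders_1 by simp
  qed (simp_all add: dumont_avoiders_0)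
  moreover have "?\<phi> - ?\<psi> = sqrt 17"
    by (simp add: field_simps)
  ultimately show ?thesis
    by simp
qed

lemma abs_binet_error_lt_half: "\<bar>((3 - sqrt 17) / 2) ^ n / sqrt 17\<bar> < 1 / 2"
proof -
  have "4 < sqrt (17::real)" "sqrt (17::real) < 5"
    by (simp_all add: real_less_rsqrt real_less_lsqrt)
  then have "\<bar>((3 - sqrt 17) / 2) ^ n\<bar> \<le> 1"
    by (simp add: power_abs power_le_one)
  then show ?thesis
    using \<open>4 < sqrt 17\<close> by (simp add: divide_le_eq)
qed

theorem theorem3p7:
  fixes n :: nat
  assumes "n \<ge> 1"
  shows "real (card (Dumont1_avoid n {[2,3,4,1], [1,4,2,3]})) =
           (1 / sqrt 17) * (((3 + sqrt 17) / 2) ^ n - ((3 - sqrt 17) / 2) ^ n)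
       \<and> int (card (Dumont1_avoid n {[2,3,4,1], [1,4,2,3]})) =
           round ((1 / sqrt 17) * ((3 + sqrt 17) / 2) ^ n)"
proof -
  let ?count = "card (Dumont1_avoid n {[2,3,4,1], [1,4,2,3]})"
  let ?\<phi> = "(3 + sqrt 17) / 2" and ?\<psi> = "(3 - sqrt 17) / 2"
  have "Dumont1_avoid n {[2,3,4,1], [1,4,2,3]} = dumont_avoiders n - {[]}"
    using Nil_notin_dumont_avoiders[OF assms] by (simp add: dumont_avoiders_def)
  then have closed: "real ?count = (1 / sqrt 17) * (?\<phi> ^ n - ?\<psi> ^ n)"
    using card_dumont_avoiders_closed_form[of n] by simp
  then have "(1 / sqrt 17) * ?\<phi> ^ n - of_int (int ?count) = ?\<psi> ^ n / sqrt 17"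
    by (simp add: algebra_simps)
  then have "round ((1 / sqrt 17) * ?\<phi> ^ n) = int ?count"
    using abs_binet_error_lt_half[of n] by (intro round_unique') simp
  with closed show ?thesis
    by simp
qed

end
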